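(* Let $u,v$ be positive integers with $uv\equiv 0\pmod 6$. Then $\Phi(u\times v,4,2)\le\left\lfloor\frac{u}{4}\left(\left\lfloor\frac{uv-1}{3}\left\lfloor\frac{uv-2}{2}\right\rfloor\right\rfloor-1\right)\right\rfloor$.
   Context: A 2-D $(u\times v,4,2)$-OOC is a family $\mathcal C$ of $u\times v$ $(0,1)$-matrices of Hamming weight $4$ such that for all $A=(a_{ij}),B=(b_{ij})\in\mathcal C$ and integers $r$ with $A\ne B$ or $r\not\equiv0\pmod v$, $\sum_{i,j}a_{ij}b_{i,j+r}\le 2$ (column indices mod $v$). $\Phi(u\times v,4,2)$ is the largest size of such a code. *)

theory Defs
  imports Complex_Main
begin

text \<open>A u x v (0,1)-matrix is represented by its support: a set of cells (i,j)
  with i < u, j < v. Hamming weight = cardinality of the support.\<close>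

definition is_matrix :: "nat \<Rightarrow> nat \<Rightarrow> (nat \<times> nat) set \<Rightarrow> bool" where
  "is_matrix u v A \<longleftrightarrow> A \<subseteq> {0..<u} \<times> {0..<v}"

definition corr :: "nat \<Rightarrow> (nat \<times> nat) set \<Rightarrow> (nat \<times> nat) set \<Rightarrow> int \<Rightarrow> nat" where
  "corr v A B r = card {(i,j) \<in> A. (i, nat ((int j + r) mod int v)) \<in> B}"

definition is_OOC_4_2 :: "nat \<Rightarrow> nat \<Rightarrow> (nat \<times> nat) set set \<Rightarrow> bool" where
  "is_OOC_4_2 u v C \<longleftrightarrow>
     (\<forall>A\<in>C. is_matrix u v A \<and> card A = 4) \<and>
     (\<forall>A\<in>C. \<forall>B\<in>C. \<forall>r::int. (A \<noteq> B \<or> \<not> (int v dvd r)) \<longrightarrow> corr v A B r \<le> 2)"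

definition Phi_4_2 :: "nat \<Rightarrow> nat \<Rightarrow> nat" where
  "Phi_4_2 u v = Max {card C | C. is_OOC_4_2 u v C}"

end

theory Submission imports Defs begin

text \<open>Fix a row \<open>i\<close>. Every incidence of a codeword \<open>A\<close> with a cell \<open>(i, j)\<close> gives, after
  cyclically shifting \<open>A\<close> so that \<open>(i, j)\<close> moves to \<open>(i, 0)\<close> and deleting that cell, a
  3-subset of the other \<open>N = uv - 1\<close> cells; two of these triples sharing two cells would make
  a correlation equal to 3. So the triples form a packing of pairs on \<open>N \<equiv> 5 (mod 6)\<close>
  points: \<open>3T \<le> N(N-1)/2 = 3M + 4\<close>, and since \<open>N - 1\<close> is even every point lies in an even
  number of uncovered pairs, so exactly one uncovered pair is impossible, giving \<open>T \<le> M\<close>.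
  Summing over the \<open>u\<close> rows counts each codeword 4 times, so \<open>4|C| \<le> uM\<close>, and \<open>M + 1\<close>
  is the inner floor of the bound.\<close>

definition pairs_in :: "'a set \<Rightarrow> 'a set set" where
  "pairs_in X = {Q. Q \<subseteq> X \<and> card Q = 2}"

lemma card_pairs_in: "finite X \<Longrightarrow> card (pairs_in X) = card X choose 2"
  unfolding pairs_in_def by (rule n_subsets)

lemma finite_pairs_in: "finite X \<Longrightarrow> finite (pairs_in X)"
  unfolding pairs_in_def by (rule finite_subset[of _ "Pow X"]) auto

lemma doubleton_in_pairs_in: "x \<noteq> z \<Longrightarrow> {x, z} \<in> pairs_in X \<longleftrightarrow> x \<in> X \<and> z \<in> X"
  unfolding pairs_in_def by auto

locale triple_packing =
  fixes P :: "'a set" and I :: "'i set" and S :: "'i \<Rightarrow> 'a set"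
  assumes finite_points: "finite P" and finite_blocks: "finite I"
    and block_subset: "k \<in> I \<Longrightarrow> S k \<subseteq> P"
    and card_block: "k \<in> I \<Longrightarrow> card (S k) = 3"
    and card_block_inter: "k \<in> I \<Longrightarrow> l \<in> I \<Longrightarrow> k \<noteq> l \<Longrightarrow> card (S k \<inter> S l) \<le> 1"
begin

definition covered :: "'a set set" where
  "covered = (\<Union>k\<in>I. pairs_in (S k))"

lemma finite_block: "k \<in> I \<Longrightarrow> finite (S k)"
  using block_subset finite_points finite_subset by blast

lemma no_common_pair:
  assumes "k \<in> I" "l \<in> I" "k \<noteq> l" "x \<noteq> z" "{x, z} \<subseteq> S k" "{x, z} \<subseteq> S l"
  shows False
proof -
  have "card {x, z} \<le> card (S k \<inter> S l)"
    using assms finite_block by (intro card_mono) auto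
  with card_block_inter[OF assms(1-3)] assms(4) show False by simp
qed

lemma card_covered: "card covered = 3 * card I"
proof -
  have "card covered = (\<Sum>k\<in>I. card (pairs_in (S k)))"
    unfolding covered_def
  proof (intro card_UN_disjoint ballI impI)
    fix k l assume "k \<in> I" "l \<in> I" "k \<noteq> l"
    show "pairs_in (S k) \<inter> pairs_in (S l) = {}"
    proof (rule equals0I)
      fix Q assume "Q \<in> pairs_in (S k) \<inter> pairs_in (S l)"
      then obtain x z where "Q = {x, z}" "x \<noteq> z" "Q \<subseteq> S k" "Q \<subseteq> S l"
        unfolding pairs_in_def by (auto simp: card_2_iff)
      with no_common_pair[OF \<open>k \<in> I\<close> \<open>l \<in> I\<close> \<open>k \<noteq> l\<close>] show False by blast
    qed
  qed (use finite_blocks finite_block finite_pairs_in in auto)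
  also have "\<dots> = (\<Sum>k\<in>I. 3)"
    by (intro sum.cong refl) (simp add: card_pairs_in finite_block card_block choose_two)
  finally show ?thesis by simp
qed

lemma covered_subset: "covered \<subseteq> pairs_in P"
proof
  fix Q assume "Q \<in> covered"
  then obtain k where k: "k \<in> I" "Q \<in> pairs_in (S k)" unfolding covered_def by (rule UN_E)
  then have "Q \<subseteq> S k" "card Q = 2" unfolding pairs_in_def by simp_all
  with block_subset[OF k(1)] show "Q \<in> pairs_in P" unfolding pairs_in_def by simp
qed

text \<open>Each block through \<open>x\<close> pairs \<open>x\<close> with exactly two further points, and no point is
  paired with \<open>x\<close> by two blocks.\<close>

lemma card_uncovered_partners:
  assumes x: "x \<in> P"
  shows "card {z \<in> P - {x}. {x, z} \<notin> covered} + 2 * card {k \<in> I. x \<in> S k} = card P - 1"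
proof -
  define K where "K = {k \<in> I. x \<in> S k}"
  define Nx where "Nx = (\<Union>k\<in>K. S k - {x})"
  have "card Nx = (\<Sum>k\<in>K. card (S k - {x}))"
    unfolding Nx_def
  proof (intro card_UN_disjoint ballI impI)
    fix k l assume kl: "k \<in> K" "l \<in> K" "k \<noteq> l"
    show "(S k - {x}) \<inter> (S l - {x}) = {}"
    proof (rule equals0I)
      fix z assume "z \<in> (S k - {x}) \<inter> (S l - {x})"
      with kl have "x \<noteq> z" "{x, z} \<subseteq> S k" "{x, z} \<subseteq> S l" "k \<in> I" "l \<in> I"
        unfolding K_def by auto
      with kl(3) show False using no_common_pair by blast
    qed
  qed (use finite_blocks finite_block in \<open>auto simp: K_def\<close>)
  also have "\<dots> = (\<Sum>k\<in>K. 2)"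
  proof (rule sum.cong)
    fix k assume "k \<in> K"
    then show "card (S k - {x}) = 2"
      unfolding K_def by (simp add: card_block finite_block)
  qed (rule refl)
  finally have card_Nx: "card Nx = 2 * card K" by simp
  have Nx_sub: "Nx \<subseteq> P - {x}"
    unfolding Nx_def K_def using block_subset by blast
  have "{z \<in> P - {x}. {x, z} \<notin> covered} = (P - {x}) - Nx"
  proof -
    have "z \<in> Nx \<longleftrightarrow> {x, z} \<in> covered" if xz: "x \<noteq> z" for z
    proof
      assume "z \<in> Nx"
      then obtain k where "k \<in> I" "x \<in> S k" "z \<in> S k" unfolding Nx_def K_def by blast
      then show "{x, z} \<in> covered"
        unfolding covered_def using doubleton_in_pairs_in[OF xz] by blast
    next
      assume "{x, z} \<in> covered"
      then obtain k where "k \<in> I" "{x, z} \<in> pairs_in (S k)" unfolding covered_def by (rule UN_E)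
      then show "z \<in> Nx"
        using doubleton_in_pairs_in[OF xz] xz unfolding Nx_def K_def by blast
    qed
    then show ?thesis by (intro set_eqI) auto
  qed
  moreover have "card ((P - {x}) - Nx) + card Nx = card P - 1"
    using card_Diff_subset[OF finite_subset[OF Nx_sub] Nx_sub] card_mono[OF _ Nx_sub]
      finite_points x by simp
  ultimately show ?thesis
    using card_Nx unfolding K_def by simp
qed

text \<open>With \<open>card P\<close> odd every point lies in an even number of uncovered pairs.\<close>

lemma card_leave_ne_1:
  assumes odd: "odd (card P)"
  shows "card (pairs_in P - covered) \<noteq> 1"
proof
  assume "card (pairs_in P - covered) = 1"
  then obtain Q where leave: "pairs_in P - covered = {Q}" by (rule card_1_singletonE)
  then have "Q \<in> pairs_in P" "Q \<notin> covered" by auto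
  then obtain x y where Q: "Q = {x, y}" "x \<noteq> y" "x \<in> P" "y \<in> P"
    unfolding pairs_in_def by (auto simp: card_2_iff)
  have "{z \<in> P - {x}. {x, z} \<notin> covered} = {y}"
  proof (intro equalityI subsetI)
    fix z assume z: "z \<in> {z \<in> P - {x}. {x, z} \<notin> covered}"
    then have "{x, z} \<in> pairs_in P - covered"
      using doubleton_in_pairs_in[of x z P] Q(3) by auto
    with leave Q(1) have "{x, z} = {x, y}" by simp
    with z show "z \<in> {y}" by (auto simp: doubleton_eq_iff)
  qed (use Q \<open>Q \<notin> covered\<close> in auto)
  with card_uncovered_partners[OF Q(3)] have "1 + 2 * card {k \<in> I. x \<in> S k} = card P - 1"
    by simp
  with odd show False by presburger
qed

theorem card_blocks:
  assumes "odd (card P)"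
  shows "3 * card I \<le> card P choose 2" and "3 * card I + 1 \<noteq> card P choose 2"
proof -
  have "card (pairs_in P - covered) + 3 * card I = card P choose 2"
    using card_Diff_subset[OF finite_subset[OF covered_subset] covered_subset]
      card_mono[OF _ covered_subset] finite_pairs_in[OF finite_points]
      card_pairs_in[OF finite_points] card_covered
    by simp
  with card_leave_ne_1[OF assms] show "3 * card I \<le> card P choose 2"
    and "3 * card I + 1 \<noteq> card P choose 2" by linarith+
qed

end

definition shift_cell :: "nat \<Rightarrow> int \<Rightarrow> nat \<times> nat \<Rightarrow> nat \<times> nat" where
  "shift_cell v r = (\<lambda>(a, b). (a, nat ((int b + r) mod int v)))"

lemma corr_eq_card_shift: "corr v A B r = card {c \<in> A. shift_cell v r c \<in> B}"
  unfolding corr_def shift_cell_def by (intro arg_cong[where f = card]) auto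

lemma shift_cell_shift_cell:
  assumes "v > 0"
  shows "shift_cell v r (shift_cell v s c) = shift_cell v (s + r) c"
proof -
  obtain a b where c: "c = (a, b)" by fastforce
  have "(int (nat ((int b + s) mod int v)) + r) mod int v = (int b + s + r) mod int v"
    using assms by (simp add: mod_add_left_eq)
  then show ?thesis unfolding c shift_cell_def by (simp add: add.assoc)
qed

lemma shift_cell_0: "snd c < v \<Longrightarrow> shift_cell v 0 c = c"
  unfolding shift_cell_def by (auto split: prod.split)

lemma shift_cell_in_grid:
  "v > 0 \<Longrightarrow> c \<in> {0..<u} \<times> {0..<v} \<Longrightarrow> shift_cell v r c \<in> {0..<u} \<times> {0..<v}"
  unfolding shift_cell_def by (auto simp: nat_less_iff)

lemma inj_on_shift_cell:
  assumes "v > 0"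
  shows "inj_on (shift_cell v r) {c. snd c < v}"
proof (rule inj_on_inverseI)
  fix c :: "nat \<times> nat" assume "c \<in> {c. snd c < v}"
  then show "shift_cell v (- r) (shift_cell v r c) = c"
    using assms by (simp add: shift_cell_shift_cell shift_cell_0)
qed

lemma is_OOC_4_2_codeword:
  assumes "is_OOC_4_2 u v C" "A \<in> C"
  shows "A \<subseteq> {0..<u} \<times> {0..<v}" and "card A = 4"
  using assms unfolding is_OOC_4_2_def is_matrix_def by auto

lemma finite_OOC_4_2: "is_OOC_4_2 u v C \<Longrightarrow> finite C"
  by (rule finite_subset[of C "Pow ({0..<u} \<times> {0..<v})"]) (auto dest: is_OOC_4_2_codeword)

text \<open>A common cell of the two translates comes from a cell \<open>c \<in> A\<close> whose shift by
  \<open>l - j\<close> lies in \<open>B\<close>, so it is counted by \<open>corr v A B (l - j)\<close>.\<close>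

lemma card_shifted_codewords_inter:
  assumes ooc: "is_OOC_4_2 u v C" and v: "v > 0" and AB: "A \<in> C" "B \<in> C"
    and jl: "j < v" "l < v" "(A, j) \<noteq> (B, l)"
  shows "card (shift_cell v (- int j) ` A \<inter> shift_cell v (- int l) ` B) \<le> 2"
proof -
  define r where "r = int l - int j"
  note grid = is_OOC_4_2_codeword(1)[OF ooc]
  have fin: "finite {c \<in> A. shift_cell v r c \<in> B}"
    using finite_subset[OF grid[OF AB(1)]] by simp
  have "shift_cell v (- int j) ` A \<inter> shift_cell v (- int l) ` B
      \<subseteq> shift_cell v (- int j) ` {c \<in> A. shift_cell v r c \<in> B}"
  proof
    fix p assume "p \<in> shift_cell v (- int j) ` A \<inter> shift_cell v (- int l) ` B"
    then obtain c d where cd: "c \<in> A" "d \<in> B" "p = shift_cell v (- int j) c"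
      "p = shift_cell v (- int l) d" by blast
    have "d = shift_cell v (int l) (shift_cell v (- int l) d)"
      using grid[OF AB(2)] cd(2) v by (auto simp: shift_cell_shift_cell shift_cell_0)
    also have "\<dots> = shift_cell v r c"
      using v unfolding cd(4)[symmetric] cd(3) r_def by (simp add: shift_cell_shift_cell)
    finally show "p \<in> shift_cell v (- int j) ` {c \<in> A. shift_cell v r c \<in> B}"
      using cd by auto
  qed
  then have "card (shift_cell v (- int j) ` A \<inter> shift_cell v (- int l) ` B)
      \<le> card (shift_cell v (- int j) ` {c \<in> A. shift_cell v r c \<in> B})"
    using fin by (intro card_mono) simp_all
  also have "\<dots> \<le> corr v A B r"
    unfolding corr_eq_card_shift using fin by (rule card_image_le)
  also have "corr v A B r \<le> 2"
  proof -
    have "A \<noteq> B \<or> \<not> int v dvd r"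
    proof (cases "A = B")
      case True
      with jl have "r \<noteq> 0" "\<bar>r\<bar> < int v" unfolding r_def by auto
      then show ?thesis using dvd_imp_le_int[of r "int v"] by linarith
    qed simp
    with ooc AB show ?thesis unfolding is_OOC_4_2_def by blast
  qed
  finally show ?thesis .
qed

lemma positive_multiple_of_6E:
  fixes n :: nat
  assumes "6 dvd n" "n > 0"
  obtains m where "n = 6 * m + 6"
proof -
  obtain q where "n = 6 * q" using assms(1) by (rule dvdE)
  with assms(2) have "n = 6 * (q - 1) + 6" by (cases q) simp_all
  then show ?thesis by (rule that)
qed

definition row_incidences :: "(nat \<times> nat) set set \<Rightarrow> nat \<Rightarrow> ((nat \<times> nat) set \<times> nat) set" where
  "row_incidences C i = {(A, j). A \<in> C \<and> (i, j) \<in> A}"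

lemma row_triple_packing:
  assumes ooc: "is_OOC_4_2 u v C" and v: "v > 0"
  shows "triple_packing ({0..<u} \<times> {0..<v} - {(i, 0)}) (row_incidences C i)
    (\<lambda>(A, j). shift_cell v (- int j) ` A - {(i, 0)})"
proof
  note grid = is_OOC_4_2_codeword(1)[OF ooc]
  have origin: "(i, 0) \<in> shift_cell v (- int j) ` A" if "(i, j) \<in> A" "j < v" for A j
    using that v by (auto intro!: image_eqI[of _ _ "(i, j)"] simp: shift_cell_def)
  have col: "j < v" if "(A, j) \<in> row_incidences C i" for A j
  proof -
    from that have "A \<in> C" "(i, j) \<in> A" unfolding row_incidences_def by simp_all
    then have "(i, j) \<in> {0..<u} \<times> {0..<v}" using grid by blast
    then show ?thesis by simp
  qed
  have "row_incidences C i \<subseteq> C \<times> {0..<v}"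
    using col by (auto simp: row_incidences_def)
  then show "finite (row_incidences C i)"
    using finite_OOC_4_2[OF ooc] finite_subset by blast
  show "finite ({0..<u} \<times> {0..<v} - {(i, 0)})" by simp
  fix k l assume k: "k \<in> row_incidences C i"
  obtain A j where kA: "k = (A, j)" "A \<in> C" "(i, j) \<in> A"
    using k unfolding row_incidences_def by auto
  show "(case k of (A, j) \<Rightarrow> shift_cell v (- int j) ` A - {(i, 0)})
      \<subseteq> {0..<u} \<times> {0..<v} - {(i, 0)}"
  proof -
    have "shift_cell v (- int j) ` A \<subseteq> {0..<u} \<times> {0..<v}"
      using grid[OF kA(2)] shift_cell_in_grid[OF v] by blast
    then show ?thesis unfolding kA by auto
  qed
  have "inj_on (shift_cell v (- int j)) A"
    using grid[OF kA(2)] by (intro inj_on_subset[OF inj_on_shift_cell[OF v]]) auto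
  then show "card (case k of (A, j) \<Rightarrow> shift_cell v (- int j) ` A - {(i, 0)}) = 3"
    using origin[OF kA(3) col] is_OOC_4_2_codeword(2)[OF ooc kA(2)] k
    unfolding kA by (simp add: card_image)
  assume l: "l \<in> row_incidences C i" and "k \<noteq> l"
  obtain B j' where lB: "l = (B, j')" "B \<in> C" "(i, j') \<in> B"
    using l unfolding row_incidences_def by auto
  let ?X = "shift_cell v (- int j) ` A" and ?Y = "shift_cell v (- int j') ` B"
  have "card (?X \<inter> ?Y) \<le> 2"
    using card_shifted_codewords_inter[OF ooc v kA(2) lB(2) col col] k l \<open>k \<noteq> l\<close>
    unfolding kA lB by blast
  moreover have "(i, 0) \<in> ?X \<inter> ?Y"
    using origin col k l kA lB by blast
  moreover have "finite (?X \<inter> ?Y)"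
    using grid[OF kA(2)] finite_subset by blast
  ultimately have "card (?X \<inter> ?Y - {(i, 0)}) \<le> 1"
    by (simp add: card_Diff_singleton)
  moreover have "(?X - {(i, 0)}) \<inter> (?Y - {(i, 0)}) = ?X \<inter> ?Y - {(i, 0)}"
    by blast
  ultimately show "card ((case k of (A, j) \<Rightarrow> shift_cell v (- int j) ` A - {(i, 0)})
      \<inter> (case l of (B, j') \<Rightarrow> shift_cell v (- int j') ` B - {(i, 0)})) \<le> 1"
    unfolding kA lB by simp
qed

lemma card_row_incidences:
  assumes ooc: "is_OOC_4_2 u v C" and v: "v > 0" and i: "i < u" and six: "6 dvd u * v"
  shows "3 * card (row_incidences C i) + 4 \<le> (u * v - 1) choose 2"
proof -
  interpret triple_packing "{0..<u} \<times> {0..<v} - {(i, 0)}" "row_incidences C i"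
    "\<lambda>(A, j). shift_cell v (- int j) ` A - {(i, 0)}"
    by (rule row_triple_packing[OF ooc v])
  obtain m where m: "u * v = 6 * m + 6"
    using six i v by (elim positive_multiple_of_6E) simp
  define M where "M = 6 * m * m + 9 * m + 2"
  have points: "card ({0..<u} \<times> {0..<v} - {(i, 0)}) = 6 * m + 5"
    using i v m by (simp add: card_Diff_singleton)
  have pairs: "(6 * m + 5) choose 2 = 3 * M + 4"
    unfolding M_def by (simp add: choose_two algebra_simps)
  have "3 * card (row_incidences C i) \<le> 3 * M + 4"
    and "3 * card (row_incidences C i) + 1 \<noteq> 3 * M + 4"
    using card_blocks points pairs by simp_all
  then have "card (row_incidences C i) \<le> M" by presburger
  moreover have "u * v - 1 = 6 * m + 5" using m by simp
  ultimately show ?thesis using pairs by (simp only:)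
qed

lemma sum_card_row_incidences:
  assumes ooc: "is_OOC_4_2 u v C"
  shows "(\<Sum>i<u. card (row_incidences C i)) = 4 * card C"
proof -
  note grid = is_OOC_4_2_codeword(1)[OF ooc]
  have fin_rows: "finite (row_incidences C i)" for i
    by (rule finite_subset[of _ "C \<times> {0..<v}"])
      (use grid finite_OOC_4_2[OF ooc] in \<open>auto simp: row_incidences_def\<close>)
  define flip where "flip = (\<lambda>(A :: (nat \<times> nat) set, (i :: nat, j :: nat)). (i, (A, j)))"
  have "inj_on flip (SIGMA A:C. A)"
    unfolding flip_def by (auto simp: inj_on_def)
  moreover have "flip ` (SIGMA A:C. A) = (SIGMA i:{..<u}. row_incidences C i)"
    using grid unfolding flip_def row_incidences_def by (auto simp: image_iff) force+
  ultimately have "card (SIGMA i:{..<u}. row_incidences C i) = card (SIGMA A:C. A)"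
    using card_image by fastforce
  also have "\<dots> = (\<Sum>A\<in>C. card A)"
    using finite_OOC_4_2[OF ooc] grid finite_subset by (subst card_SigmaI) blast+
  also have "\<dots> = 4 * card C"
    using is_OOC_4_2_codeword(2)[OF ooc] by simp
  finally show ?thesis
    using fin_rows by (simp add: card_SigmaI)
qed

lemma card_OOC_4_2:
  assumes ooc: "is_OOC_4_2 u v C" and "v > 0" "6 dvd u * v"
  shows "12 * card C + 4 * u \<le> u * ((u * v - 1) choose 2)"
proof -
  have "12 * card C + 4 * u = (\<Sum>i<u. 3 * card (row_incidences C i) + 4)"
    using sum_card_row_incidences[OF ooc] by (simp add: sum.distrib sum_distrib_left[symmetric])
  also have "\<dots> \<le> (\<Sum>i<u. (u * v - 1) choose 2)"
    using card_row_incidences[OF ooc assms(2) _ assms(3)] by (intro sum_mono) auto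
  finally show ?thesis by simp
qed

lemma Phi_4_2_le:
  assumes "\<And>C. is_OOC_4_2 u v C \<Longrightarrow> card C \<le> b"
  shows "Phi_4_2 u v \<le> b"
proof -
  have "{card C | C. is_OOC_4_2 u v C} \<subseteq> {..b}"
    using assms by auto
  moreover have "is_OOC_4_2 u v {}"
    unfolding is_OOC_4_2_def by simp
  ultimately show ?thesis
    unfolding Phi_4_2_def using assms by (subst Max_le_iff) (auto intro: finite_subset)
qed

theorem lemma5p1:
  fixes u v :: nat
  assumes "u > 0" and "v > 0" and "(u * v) mod 6 = 0"
  shows "int (Phi_4_2 u v) \<le>
    \<lfloor>(real u / 4) * (real_of_int \<lfloor>(real (u * v) - 1) / 3 * real_of_int \<lfloor>(real (u * v) - 2) / 2\<rfloor>\<rfloor> - 1)\<rfloor>"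
proof -
  have six: "6 dvd u * v" using assms(3) by (rule mod_0_imp_dvd)
  then obtain m where m: "u * v = 6 * m + 6"
    using assms(1,2) by (elim positive_multiple_of_6E) simp
  define M where "M = 6 * m * m + 9 * m + 2"
  have "(u * v - 1) choose 2 = 3 * M + 4"
    unfolding m M_def by (simp add: choose_two algebra_simps)
  then have "4 * card C \<le> u * M" if "is_OOC_4_2 u v C" for C
    using card_OOC_4_2[OF that assms(2) six] by (simp add: algebra_simps)
  then have "Phi_4_2 u v \<le> u * M div 4"
    by (intro Phi_4_2_le) (simp add: less_eq_div_iff_mult_less_eq mult.commute)
  then have "Phi_4_2 u v * 4 \<le> u * M"
    by (simp add: less_eq_div_iff_mult_less_eq)
  then have "real (Phi_4_2 u v * 4) \<le> real (u * M)"
    by (rule of_nat_mono)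
  then have "real (Phi_4_2 u v) \<le> real u / 4 * real M"
    by simp
  moreover have "\<lfloor>(real (u * v) - 2) / 2\<rfloor> = 3 * int m + 2"
    unfolding m by (simp add: floor_eq_iff)
  moreover have "\<lfloor>(real (u * v) - 1) / 3 * real_of_int (3 * int m + 2)\<rfloor> = int M + 1"
    unfolding m M_def by (simp add: floor_eq_iff algebra_simps)
  ultimately show ?thesis
    by (simp add: le_floor_iff)
qed

end
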